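(* Let $S$ be a surface of revolution in $E^{3}$ with nowhere vanishing Gaussian curvature $K$, and suppose its position vector $\boldsymbol{x}$ satisfies $\Delta^{II}\boldsymbol{x}=A\boldsymbol{x}$ for some real $3\times 3$ matrix $A$. Then $S$ is (an open part of) a catenoid or (an open part of) a sphere.
   Context: A surface of revolution is given (after a rigid motion placing the axis of revolution on the $z$-axis) by $\boldsymbol{x}(u,v)=(p(u)\cos v,\,p(u)\sin v,\,q(u))$, $u\in(a,b)$, $v\in[0,2\pi)$, where $p,q$ are smooth, $p>0$, and the profile curve $u\mapsto(p(u),0,q(u))$ is parametrized by arc length, $(p')^{2}+(q')^{2}=1$. Let $\boldsymbol{n}=\frac{\boldsymbol{x}_{u^1}\times\boldsymbol{x}_{u^2}}{\|\boldsymbol{x}_{u^1}\times\boldsymbol{x}_{u^2}\|}$ be the unit normal and $II=b_{ij}du^{i}du^{j}$ the second fundamental form with $b_{ij}=\langle \boldsymbol{x}_{u^iu^j},\boldsymbol{n}\rangle$ (with $(u^1,u^2)=(u,v)$). Since $K\neq0$, $(b_{ij})$ is nondegenerate; let $(b^{ij})$ be its inverse and $b=\det(b_{ij})$. The Laplace (second Beltrami) operator of $II$ acting on a smooth function $f$ is $$\Delta^{II}f=-\frac{1}{\sqrt{|b|}}\frac{\partial}{\partial u^{i}}\Big(\sqrt{|b|}\,b^{ij}\frac{\partial f}{\partial u^{j}}\Big)$$ (summation over $i,j$), and $\Delta^{II}\boldsymbol{x}=(\Delta^{II}x_1,\Delta^{II}x_2,\Delta^{II}x_3)$ is applied to the coordinate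 functions of $\boldsymbol{x}$; $A\boldsymbol{x}$ is the matrix acting on the column vector $(x_1,x_2,x_3)^T$. *)

theory Defs
  imports "HOL-Analysis.Analysis"
begin

definition smooth_real_on :: "real set \<Rightarrow> (real \<Rightarrow> real) \<Rightarrow> bool" where
  "smooth_real_on S f \<longleftrightarrow>
     (\<forall>n. \<forall>x\<in>S. ((deriv ^^ n) f has_real_derivative (deriv ^^ Suc n) f x) (at x))"

definition rev_surf :: "(real \<Rightarrow> real) \<Rightarrow> (real \<Rightarrow> real) \<Rightarrow> real \<Rightarrow> real \<Rightarrow> real^3" where
  "rev_surf p q u v = vector [p u * cos v, p u * sin v, q u]"

definition pd :: "nat \<Rightarrow> (real \<Rightarrow> real \<Rightarrow> 'a::real_normed_vector) \<Rightarrow> real \<Rightarrow> real \<Rightarrow> 'a" where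
  "pd i f u v = (if i = 1 then vector_derivative (\<lambda>s. f s v) (at u)
                 else vector_derivative (\<lambda>s. f u s) (at v))"

definition unit_normal :: "(real \<Rightarrow> real \<Rightarrow> real^3) \<Rightarrow> real \<Rightarrow> real \<Rightarrow> real^3" where
  "unit_normal X u v =
     (let c = cross3 (pd 1 X u v) (pd 2 X u v) in (1 / norm c) *\<^sub>R c)"

definition fff :: "(real \<Rightarrow> real \<Rightarrow> real^3) \<Rightarrow> nat \<Rightarrow> nat \<Rightarrow> real \<Rightarrow> real \<Rightarrow> real" where
  "fff X i j u v = pd i X u v \<bullet> pd j X u v"

definition sff :: "(real \<Rightarrow> real \<Rightarrow> real^3) \<Rightarrow> nat \<Rightarrow> nat \<Rightarrow> real \<Rightarrow> real \<Rightarrow> real" where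
  "sff X i j u v = pd j (pd i X) u v \<bullet> unit_normal X u v"

definition det2 :: "(nat \<Rightarrow> nat \<Rightarrow> real) \<Rightarrow> real" where
  "det2 M = M 1 1 * M 2 2 - M 1 2 * M 2 1"

definition inv2 :: "(nat \<Rightarrow> nat \<Rightarrow> real) \<Rightarrow> nat \<Rightarrow> nat \<Rightarrow> real" where
  "inv2 M i j = (if i = 1 \<and> j = 1 then M 2 2 else if i = 2 \<and> j = 2 then M 1 1 else - M i j) / det2 M"

definition gauss_curv :: "(real \<Rightarrow> real \<Rightarrow> real^3) \<Rightarrow> real \<Rightarrow> real \<Rightarrow> real" where
  "gauss_curv X u v = det2 (\<lambda>i j. sff X i j u v) / det2 (\<lambda>i j. fff X i j u v)"

definition laplace_II :: "(real \<Rightarrow> real \<Rightarrow> real^3) \<Rightarrow> (real \<Rightarrow> real \<Rightarrow> real) \<Rightarrow> real \<Rightarrow> real \<Rightarrow> real" where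
  "laplace_II X f u v =
     - (1 / sqrt \<bar>det2 (\<lambda>k l. sff X k l u v)\<bar>) *
       (\<Sum>i\<in>{1,2}. pd i (\<lambda>u' v'. sqrt \<bar>det2 (\<lambda>k l. sff X k l u' v')\<bar> *
            (\<Sum>j\<in>{1,2}. inv2 (\<lambda>k l. sff X k l u' v') i j * pd j f u' v')) u v)"

definition std_catenoid :: "real \<Rightarrow> (real^3) set" where
  "std_catenoid c = {x. sqrt ((x$1)^2 + (x$2)^2) = c * cosh (x$3 / c)}"

definition is_catenoid :: "(real^3) set \<Rightarrow> bool" where
  "is_catenoid C \<longleftrightarrow> (\<exists>c>0. \<exists>f::real^3 \<Rightarrow> real^3.
      (\<forall>x y. dist (f x) (f y) = dist x y) \<and> C = f ` std_catenoid c)"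

definition is_sphere :: "(real^3) set \<Rightarrow> bool" where
  "is_sphere C \<longleftrightarrow> (\<exists>z r. r > 0 \<and> C = sphere z r)"

end

theory Submission
  imports Defs "HOL-Computational_Algebra.Polynomial"
begin

text \<open>For an arc-length profile (p, q) the second fundamental form is diagonal, with entries
  the profile curvature k and p q'. Hence the Laplacian of the position vector has the form
  (L1 u cos v, L1 u sin v, L3 u), and comparing with A x on the meridians v = 0 and v = pi gives
  the two ordinary differential equations L1 = la p and L3 = mu q, where la = A 1 1 and
  mu = A 3 3. They combine into the first integral la p q' - mu q p' = 2 and an explicit
  formula for k in terms of p and q'. If la = mu, the position vector is orthogonal to the
  tangent and the profile is a circle about the origin: a sphere. If mu = 0, the product p q' is
  constant and the profile is a catenary: a catenoid. Otherwise p u and q' u satisfy two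
  polynomial relations whose resultant is a nonzero polynomial in p u; then p is constant,
  which contradicts k \<noteq> 0.\<close>

section \<open>Calculus on intervals\<close>

lemma DERIV_zero_if_locally_constant:
  assumes "(f has_real_derivative f') (at x)" "open S" "x \<in> S" "\<And>y. y \<in> S \<Longrightarrow> f y = k"
  shows "f' = 0"
proof -
  have "((\<lambda>_. k) has_real_derivative f') (at x)"
    by (rule has_field_derivative_transform_within_open[OF assms(1-3)]) (simp add: assms(4))
  then show ?thesis
    using DERIV_unique DERIV_const by blast
qed

lemma zero_if_mult_zero_DERIV_nonzero:
  fixes c X d :: "real \<Rightarrow> real"
  assumes "open I" and c_deriv: "\<And>u. u \<in> I \<Longrightarrow> (c has_real_derivative d u) (at u)"
    and d_nz: "\<And>u. u \<in> I \<Longrightarrow> d u \<noteq> 0"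
    and X_cont: "\<And>u. u \<in> I \<Longrightarrow> isCont X u"
    and cX: "\<And>u. u \<in> I \<Longrightarrow> c u * X u = 0"
    and "u \<in> I"
  shows "X u = 0"
proof (rule ccontr)
  assume "X u \<noteq> 0"
  then obtain e where "e > 0" and X_nz: "\<And>y. dist u y < e \<Longrightarrow> X y \<noteq> 0"
    using continuous_at_avoid X_cont \<open>u \<in> I\<close> by metis
  have "d u = 0"
  proof (rule DERIV_zero_if_locally_constant[OF c_deriv])
    show "open (ball u e \<inter> I)" "u \<in> ball u e \<inter> I"
      using \<open>open I\<close> \<open>u \<in> I\<close> \<open>e > 0\<close> by auto
    show "c y = 0" if "y \<in> ball u e \<inter> I" for y
      using that X_nz cX by auto
  qed fact
  with d_nz \<open>u \<in> I\<close> show False by simp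
qed

lemma constant_if_poly_root:
  fixes f :: "real \<Rightarrow> real"
  assumes "Q \<noteq> 0" "connected I" "continuous_on I f" "\<And>u. u \<in> I \<Longrightarrow> poly Q (f u) = 0"
    and "u \<in> I" "v \<in> I"
  shows "f u = f v"
proof -
  have "finite (f ` I)"
    by (rule finite_subset[OF _ poly_roots_finite[OF assms(1)]]) (use assms(4) in auto)
  moreover have "connected (f ` I)"
    using connected_continuous_image assms(2,3) by blast
  ultimately show ?thesis
    using connected_finite_iff_sing assms(5,6) by (metis empty_iff image_eqI singletonD)
qed

lemma inj_on_if_DERIV_nonzero:
  fixes f f' :: "real \<Rightarrow> real"
  assumes "convex I" "\<And>u. u \<in> I \<Longrightarrow> (f has_real_derivative f' u) (at u)"
    and "\<And>u. u \<in> I \<Longrightarrow> f' u \<noteq> 0"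
  shows "inj_on f I"
proof (rule inj_onI, rule ccontr)
  fix x y assume x: "x \<in> I" and y: "y \<in> I" and "f x = f y" and "x \<noteq> y"
  define l r where "l = min x y" and "r = max x y"
  have "l < r" "f r - f l = 0"
    using \<open>x \<noteq> y\<close> \<open>f x = f y\<close> by (auto simp: l_def r_def)
  have lr: "{l..r} \<subseteq> I"
    using \<open>convex I\<close> x y by (auto simp: l_def r_def min_def max_def convex_contains_segment
        closed_segment_eq_real_ivl split: if_splits)
  obtain z where "l < z" "z < r" "f r - f l = (r - l) * f' z"
    using MVT2[OF \<open>l < r\<close>, of f f'] assms(2) lr by (meson atLeastAtMost_iff subsetD)
  moreover have "z \<in> I"
    using lr \<open>l < z\<close> \<open>z < r\<close> by auto
  ultimately show False
    using \<open>f r - f l = 0\<close> \<open>l < r\<close> assms(3) by simp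
qed

lemma cosh_sinh_combination_eq_cosh_shift:
  fixes \<alpha> \<beta> C :: real
  assumes "C > 0" "\<alpha>^2 - \<beta>^2 = C^2" "\<alpha> > 0"
  shows "\<exists>t. \<forall>x. \<alpha> * cosh x + \<beta> * sinh x = C * cosh (x + t)"
proof -
  have "\<beta>^2 < \<alpha>^2"
    using assms(1,2) by (simp add: algebra_simps)
  then have "\<bar>\<beta>\<bar> < \<alpha>"
    using assms(3) power_less_imp_less_base[of "\<bar>\<beta>\<bar>" 2 \<alpha>] by simp
  then have pos: "\<alpha> + \<beta> > 0" "\<alpha> - \<beta> > 0"
    by linarith+
  define t where "t = ln ((\<alpha> + \<beta>) / C)"
  have exp_t: "exp t = (\<alpha> + \<beta>) / C"
    using pos assms(1) by (simp add: t_def)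
  have exp_minus_t: "exp (-t) = (\<alpha> - \<beta>) / C"
  proof -
    have "(\<alpha> + \<beta>) * (\<alpha> - \<beta>) = C^2"
      using assms(2) by (simp add: algebra_simps power2_eq_square)
    then show ?thesis
      using pos assms(1) by (simp add: exp_minus exp_t field_simps power2_eq_square)
  qed
  have "C * cosh t = \<alpha>" "C * sinh t = \<beta>"
    using exp_t exp_minus_t assms(1) by (simp_all add: cosh_field_def sinh_field_def field_simps)
  then have "\<alpha> * cosh x + \<beta> * sinh x = C * (cosh x * cosh t + sinh x * sinh t)" for x
    by (auto simp: algebra_simps)
  then have "\<alpha> * cosh x + \<beta> * sinh x = C * cosh (x + t)" for x
    by (simp add: cosh_add)
  then show ?thesis
    by blast
qed

lemma cosh_sinh_combination_eq_catenary:
  fixes \<alpha> \<beta> c0 y :: real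
  assumes "c0 \<noteq> 0" "\<alpha>^2 - \<beta>^2 = c0^2" "\<alpha> * cosh y + \<beta> * sinh y > 0"
  shows "\<exists>C>0. \<exists>d. \<forall>x. \<alpha> * cosh (x / c0) + \<beta> * sinh (x / c0) = C * cosh ((x - d) / C)"
proof -
  define C where "C = \<bar>c0\<bar>"
  have "C > 0" "\<alpha>^2 - \<beta>^2 = C^2"
    using assms(1,2) by (auto simp: C_def)
  have "\<alpha> > 0"
  proof (rule ccontr)
    assume "\<not> \<alpha> > 0"
    have "\<beta>^2 \<le> \<alpha>^2"
      using assms(2) zero_le_power2[of c0] by linarith
    then have "\<bar>\<beta>\<bar> \<le> - \<alpha>"
      using \<open>\<not> \<alpha> > 0\<close> abs_le_square_iff[of \<beta> \<alpha>] by simp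
    have "\<bar>sinh y\<bar> \<le> cosh y"
      using sinh_less_cosh_real[of y] sinh_less_cosh_real[of "-y"] by (simp add: abs_if)
    have "\<beta> * sinh y \<le> \<bar>\<beta>\<bar> * \<bar>sinh y\<bar>"
      by (simp flip: abs_mult)
    also have "\<dots> \<le> (- \<alpha>) * cosh y"
      using \<open>\<bar>\<beta>\<bar> \<le> - \<alpha>\<close> \<open>\<bar>sinh y\<bar> \<le> cosh y\<close> by (intro mult_mono) auto
    finally show False
      using assms(3) by simp
  qed
  then obtain t where t: "\<And>x. \<alpha> * cosh x + \<beta> * sinh x = C * cosh (x + t)"
    using cosh_sinh_combination_eq_cosh_shift[OF \<open>C > 0\<close> \<open>\<alpha>^2 - \<beta>^2 = C^2\<close>] by blast
  have "\<alpha> * cosh (x / c0) + \<beta> * sinh (x / c0) = C * cosh ((x - (- c0 * t)) / C)" for x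
  proof -
    have "(x + c0 * t) / C = x / c0 + t \<or> (x + c0 * t) / C = - (x / c0 + t)"
      using assms(1) by (cases "c0 > 0") (auto simp: C_def field_simps)
    then have "cosh ((x + c0 * t) / C) = cosh (x / c0 + t)"
      by (elim disjE) (simp_all only: cosh_minus)
    then show ?thesis
      using t by simp
  qed
  then show ?thesis
    using \<open>C > 0\<close> by blast
qed

section \<open>Elimination polynomials\<close>

text \<open>P_elim la mu (p u) (s u) = 0 is obtained by eliminating q u and c u between the first
  integral, its derivative and the curvature equation of locale profile_ode below; kp_elim is
  the value of k u * p u given by the curvature equation, so that T_elim la mu (p u) (s u) is
  p u / c u times the derivative of P_elim la mu (p u) (s u).\<close>

definition P_elim :: "real \<Rightarrow> real \<Rightarrow> real \<Rightarrow> real \<Rightarrow> real" where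
  "P_elim la mu x y = (0 - la^3 * x^3 * y + la^2 * mu * x^3 * y + 2 * la^2 * x^2 * y^2 + 2 * la^2 * x^2
      - 2 * la * mu * x^2 * y^2 - la * mu * x^2 - la * x * y^3 - 4 * la * x * y + mu * x * y^3 + mu * x * y
      + 2 * y^2)"

definition P_elim_dx :: "real \<Rightarrow> real \<Rightarrow> real \<Rightarrow> real \<Rightarrow> real" where
  "P_elim_dx la mu x y = (0 - 3 * la^3 * x^2 * y + 3 * la^2 * mu * x^2 * y + 4 * la^2 * x * y^2 + 4 * la^2 * x
      - 4 * la * mu * x * y^2 - 2 * la * mu * x - la * y^3 - 4 * la * y + mu * y^3 + mu * y)"

definition P_elim_dy :: "real \<Rightarrow> real \<Rightarrow> real \<Rightarrow> real \<Rightarrow> real" where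
  "P_elim_dy la mu x y = (0 - la^3 * x^3 + la^2 * mu * x^3 + 4 * la^2 * x^2 * y - 4 * la * mu * x^2 * y
      - 3 * la * x * y^2 - 4 * la * x + 3 * mu * x * y^2 + mu * x + 4 * y)"

definition kp_elim :: "real \<Rightarrow> real \<Rightarrow> real \<Rightarrow> real \<Rightarrow> real" where
  "kp_elim la mu x y = (0 - la^2 * x^2 * y + la * mu * x^2 * y + 2 * la * x - mu * x - y)"

definition T_elim :: "real \<Rightarrow> real \<Rightarrow> real \<Rightarrow> real \<Rightarrow> real" where
  "T_elim la mu x y = (la^5 * x^5 * y - 2 * la^4 * mu * x^5 * y - 4 * la^4 * x^4 * y^2 - 2 * la^4 * x^4
      + la^3 * mu^2 * x^5 * y + 8 * la^3 * mu * x^4 * y^2 + 3 * la^3 * mu * x^4 + 3 * la^3 * x^3 * y^3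
      + 10 * la^3 * x^3 * y - 4 * la^2 * mu^2 * x^4 * y^2 - la^2 * mu^2 * x^4 - 6 * la^2 * mu * x^3 * y^3
      - 15 * la^2 * mu * x^3 * y - 10 * la^2 * x^2 * y^2 - 4 * la^2 * x^2 + 3 * la * mu^2 * x^3 * y^3
      + 5 * la * mu^2 * x^3 * y + 13 * la * mu * x^2 * y^2 + 4 * la * mu * x^2 + 2 * la * x * y^3
      + 8 * la * x * y - 3 * mu^2 * x^2 * y^2 - mu^2 * x^2 - 2 * mu * x * y^3 - 4 * mu * x * y - 4 * y^2)"

lemma T_elim_eq: "T_elim la mu x y = x * P_elim_dx la mu x y + P_elim_dy la mu x y * kp_elim la mu x y"
  unfolding T_elim_def P_elim_dx_def P_elim_dy_def kp_elim_def by algebra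

lemma poly_even_quartic: "poly [:a, 0, b, 0, c:] x = a + b * x^2 + c * x^4" for a b c x :: real
  by (simp add: algebra_simps eval_nat_numeral)

definition elim_res :: "real \<Rightarrow> real \<Rightarrow> real poly" where
  "elim_res la mu = [:(8 * la^5 * mu^4 - 36 * la^4 * mu^5 + 64 * la^3 * mu^6 - 56 * la^2 * mu^7 + 24 * la * mu^8
      - 4 * mu^9), 0,
    (8 * la^8 * mu^3 - 46 * la^7 * mu^4 + 109 * la^6 * mu^5 - 136 * la^5 * mu^6 + 94 * la^4 * mu^7
        - 34 * la^3 * mu^8 + 5 * la^2 * mu^9), 0,
    (0 - 2 * la^10 * mu^3 + 11 * la^9 * mu^4 - 25 * la^8 * mu^5 + 30 * la^7 * mu^6 - 20 * la^6 * mu^7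
        + 7 * la^5 * mu^8 - la^4 * mu^9):]"

lemma P_T_elimination:
  "(la^11 * mu^2 * x^13 + 4 * la^11 * mu * x^12 * y - 6 * la^10 * mu^3 * x^13
    - 30 * la^10 * mu^2 * x^12 * y - 12 * la^10 * mu * x^11 * y^2 - 8 * la^10 * mu * x^11 + 15 * la^9 * mu^4 * x^13
    + 96 * la^9 * mu^3 * x^12 * y + 81 * la^9 * mu^2 * x^11 * y^2 + 54 * la^9 * mu^2 * x^11 + 16 * la^9 * mu * x^10 * y
    - 20 * la^8 * mu^5 * x^13 - 170 * la^8 * mu^4 * x^12 * y - 234 * la^8 * mu^3 * x^11 * y^2 - 152 * la^8 * mu^3 * x^11
    - 116 * la^8 * mu^2 * x^10 * y + 40 * la^8 * mu * x^9 * y^2 + 16 * la^8 * mu * x^9 + 15 * la^7 * mu^6 * x^13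
    + 180 * la^7 * mu^5 * x^12 * y + 375 * la^7 * mu^4 * x^11 * y^2 + 230 * la^7 * mu^4 * x^11 + 340 * la^7 * mu^3 * x^10 * y
    - 236 * la^7 * mu^2 * x^9 * y^2 - 68 * la^7 * mu^2 * x^9 - 112 * la^7 * mu * x^8 * y - 6 * la^6 * mu^7 * x^13
    - 114 * la^6 * mu^6 * x^12 * y - 360 * la^6 * mu^5 * x^11 * y^2 - 200 * la^6 * mu^5 * x^11 - 520 * la^6 * mu^4 * x^10 * y
    + 598 * la^6 * mu^3 * x^9 * y^2 + 132 * la^6 * mu^3 * x^9 + 580 * la^6 * mu^2 * x^8 * y + 32 * la^6 * mu * x^7 * y^2
    + 64 * la^6 * mu * x^7 + la^5 * mu^8 * x^13 + 40 * la^5 * mu^7 * x^12 * y + 207 * la^5 * mu^6 * x^11 * y^2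
    + 98 * la^5 * mu^6 * x^11 + 440 * la^5 * mu^5 * x^10 * y - 850 * la^5 * mu^4 * x^9 * y^2 - 177 * la^5 * mu^4 * x^9
    - 1304 * la^5 * mu^3 * x^8 * y - 132 * la^5 * mu^2 * x^7 * y^2 - 280 * la^5 * mu^2 * x^7 - 64 * la^5 * mu * x^6 * y
    - 6 * la^4 * mu^8 * x^12 * y - 66 * la^4 * mu^7 * x^11 * y^2 - 24 * la^4 * mu^7 * x^11 - 196 * la^4 * mu^6 * x^10 * y
    + 740 * la^4 * mu^5 * x^9 * y^2 + 188 * la^4 * mu^5 * x^9 + 1674 * la^4 * mu^4 * x^8 * y + 220 * la^4 * mu^3 * x^7 * y^2
    + 548 * la^4 * mu^3 * x^7 + 184 * la^4 * mu^2 * x^6 * y + 9 * la^3 * mu^8 * x^11 * y^2 + 2 * la^3 * mu^8 * x^11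
    + 36 * la^3 * mu^7 * x^10 * y - 400 * la^3 * mu^6 * x^9 * y^2 - 138 * la^3 * mu^6 * x^9 - 1336 * la^3 * mu^5 * x^8 * y
    - 200 * la^3 * mu^4 * x^7 * y^2 - 636 * la^3 * mu^4 * x^7 - 176 * la^3 * mu^3 * x^6 * y + 16 * la^3 * mu^2 * x^5 * y^2
    + 32 * la^3 * mu^2 * x^5 + 126 * la^2 * mu^7 * x^9 * y^2 + 56 * la^2 * mu^7 * x^9 + 656 * la^2 * mu^6 * x^8 * y
    + 120 * la^2 * mu^5 * x^7 * y^2 + 460 * la^2 * mu^5 * x^7 + 64 * la^2 * mu^4 * x^6 * y - 48 * la^2 * mu^3 * x^5 * y^2
    - 80 * la^2 * mu^3 * x^5 - 32 * la^2 * mu^2 * x^4 * y - 18 * la * mu^8 * x^9 * y^2 - 9 * la * mu^8 * x^9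
    - 176 * la * mu^7 * x^8 * y - 52 * la * mu^6 * x^7 * y^2 - 188 * la * mu^6 * x^7 - 16 * la * mu^5 * x^6 * y
    + 48 * la * mu^4 * x^5 * y^2 + 64 * la * mu^4 * x^5 + 64 * la * mu^3 * x^4 * y + 18 * mu^8 * x^8 * y
    + 12 * mu^7 * x^7 * y^2 + 32 * mu^7 * x^7 + 8 * mu^6 * x^6 * y - 16 * mu^5 * x^5 * y^2 - 16 * mu^5 * x^5
    - 32 * mu^4 * x^4 * y) * P_elim la mu x y + (la^9 * mu^2 * x^11 + 4 * la^9 * mu * x^10 * y - 5 * la^8 * mu^3 * x^11
    - 24 * la^8 * mu^2 * x^10 * y - 4 * la^8 * mu * x^9 * y^2 - 8 * la^8 * mu * x^9 + 10 * la^7 * mu^4 * x^11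
    + 60 * la^7 * mu^3 * x^10 * y + 23 * la^7 * mu^2 * x^9 * y^2 + 44 * la^7 * mu^2 * x^9 - 8 * la^7 * mu * x^8 * y
    - 10 * la^6 * mu^5 * x^11 - 80 * la^6 * mu^4 * x^10 * y - 55 * la^6 * mu^3 * x^9 * y^2 - 96 * la^6 * mu^3 * x^9
    + 36 * la^6 * mu^2 * x^8 * y + 16 * la^6 * mu * x^7 * y^2 + 32 * la^6 * mu * x^7 + 5 * la^5 * mu^6 * x^11
    + 60 * la^5 * mu^5 * x^10 * y + 70 * la^5 * mu^4 * x^9 * y^2 + 104 * la^5 * mu^4 * x^9 - 71 * la^5 * mu^3 * x^8 * y
    - 78 * la^5 * mu^2 * x^7 * y^2 - 132 * la^5 * mu^2 * x^7 - 32 * la^5 * mu * x^6 * y - la^4 * mu^7 * x^11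
    - 24 * la^4 * mu^6 * x^10 * y - 50 * la^4 * mu^5 * x^9 * y^2 - 56 * la^4 * mu^5 * x^9 + 84 * la^4 * mu^4 * x^8 * y
    + 158 * la^4 * mu^3 * x^7 * y^2 + 232 * la^4 * mu^3 * x^7 + 116 * la^4 * mu^2 * x^6 * y + 4 * la^3 * mu^7 * x^10 * y
    + 19 * la^3 * mu^6 * x^9 * y^2 + 12 * la^3 * mu^6 * x^9 - 66 * la^3 * mu^5 * x^8 * y - 172 * la^3 * mu^4 * x^7 * y^2
    - 228 * la^3 * mu^4 * x^7 - 172 * la^3 * mu^3 * x^6 * y + 8 * la^3 * mu^2 * x^5 * y^2 + 16 * la^3 * mu^2 * x^5
    - 3 * la^2 * mu^7 * x^9 * y^2 + 32 * la^2 * mu^6 * x^8 * y + 108 * la^2 * mu^5 * x^7 * y^2 + 132 * la^2 * mu^5 * x^7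
    + 140 * la^2 * mu^4 * x^6 * y - 24 * la^2 * mu^3 * x^5 * y^2 - 32 * la^2 * mu^3 * x^5 - 16 * la^2 * mu^2 * x^4 * y
    - 7 * la * mu^7 * x^8 * y - 38 * la * mu^6 * x^7 * y^2 - 40 * la * mu^6 * x^7 - 68 * la * mu^5 * x^6 * y
    + 24 * la * mu^4 * x^5 * y^2 + 16 * la * mu^4 * x^5 + 32 * la * mu^3 * x^4 * y + 6 * mu^7 * x^7 * y^2
    + 4 * mu^7 * x^7 + 16 * mu^6 * x^6 * y - 8 * mu^5 * x^5 * y^2 - 16 * mu^4 * x^4 * y) * T_elim la mu x y
    = x^9 * poly (elim_res la mu) x"
  unfolding P_elim_def T_elim_def elim_res_def poly_even_quartic by algebra

lemma poly_elim_res_0: "poly (elim_res la mu) 0 = 4 * mu^4 * (la - mu)^4 * (2 * la - mu)"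
  unfolding elim_res_def by simp algebra

lemma P_T_elimination_mu_2la:
  fixes la x y :: real
  shows "P_elim la (2*la) x y = y * (la^3 * x^3 - 2 * la^2 * x^2 * y + la * x * y^2 - 2 * la * x + 2 * y)"
    and "T_elim la (2*la) x y = y * (la^5 * x^5 - 4 * la^4 * x^4 * y + 3 * la^3 * x^3 * y^2
      + 4 * la^2 * x^2 * y - 2 * la * x * y^2 - 4 * y)"
    and "(0 - 6 * la^12 * x^12 + 18 * la^11 * x^11 * y + 16 * la^10 * x^10 - 78 * la^9 * x^9 * y
        - 20 * la^8 * x^8 + 80 * la^7 * x^7 * y + 56 * la^6 * x^6 - 24 * la^5 * x^5 * y - 32 * la^4 * x^4)
      * (la^3 * x^3 - 2 * la^2 * x^2 * y + la * x * y^2 - 2 * la * x + 2 * y)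
      + (6 * la^10 * x^10 - 6 * la^9 * x^9 * y - 28 * la^8 * x^8 + 22 * la^7 * x^7 * y + 40 * la^6 * x^6
        - 12 * la^5 * x^5 * y - 16 * la^4 * x^4)
      * (la^5 * x^5 - 4 * la^4 * x^4 * y + 3 * la^3 * x^3 * y^2 + 4 * la^2 * x^2 * y - 2 * la * x * y^2 - 4 * y)
    = (0 - 4) * la^5 * x^5 * (3 * la^6 * x^6 - 20 * la^4 * x^4 + 36 * la^2 * x^2 - 16)"
  unfolding P_elim_def T_elim_def by algebra+

section \<open>Open pieces of surfaces of revolution\<close>

lemma rev_surf_nth [simp]:
  "rev_surf p q u v $ 1 = p u * cos v" "rev_surf p q u v $ 2 = p u * sin v" "rev_surf p q u v $ 3 = q u"
  by (simp_all add: rev_surf_def)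

lemma sqrt_eq_iff_eq_power2: "0 \<le> x \<Longrightarrow> 0 \<le> y \<Longrightarrow> sqrt x = y \<longleftrightarrow> x = y^2"
  for x y :: real
  by (auto simp: real_sqrt_unique)

lemma polar_coordinates_2pi:
  fixes x y r :: real
  assumes "sqrt (x^2 + y^2) = r" "r > 0"
  obtains v where "0 \<le> v" "v < 2 * pi" "x = r * cos v" "y = r * sin v"
proof -
  have "(x / r)^2 + (y / r)^2 = 1"
    using assms by (auto simp: field_simps)
  then obtain v where "0 \<le> v" "v < 2 * pi" "x / r = cos v" "y / r = sin v"
    using sincos_total_2pi by blast
  then show ?thesis
    using that assms(2) by (simp add: field_simps)
qed

text \<open>The image is the part of C lying over the open set q ` I of heights.\<close>
lemma rev_surf_image_openin:
  fixes p q :: "real \<Rightarrow> real" and C :: "(real^3) set"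
  assumes "open (q ` I)" and p_pos: "\<And>u. u \<in> I \<Longrightarrow> p u > 0"
    and mem_C: "\<And>u x. u \<in> I \<Longrightarrow> x $ 3 = q u \<Longrightarrow> x \<in> C \<longleftrightarrow> sqrt ((x $ 1)^2 + (x $ 2)^2) = p u"
  shows "(\<lambda>(u, v). rev_surf p q u v) ` (I \<times> {0..<2*pi}) \<subseteq> C \<and>
         openin (top_of_set C) ((\<lambda>(u, v). rev_surf p q u v) ` (I \<times> {0..<2*pi}))"
proof -
  define S where "S = (\<lambda>(u, v). rev_surf p q u v) ` (I \<times> {0..<2*pi})"
  define T where "T = (\<lambda>x::real^3. x $ 3) -` (q ` I)"
  have "rev_surf p q u v \<in> C" if "u \<in> I" for u v
  proof -
    have "(p u * cos v)^2 + (p u * sin v)^2 = (p u)^2"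
      by (simp add: power_mult_distrib flip: distrib_left)
    then show ?thesis
      using mem_C[OF that] p_pos[OF that] by simp
  qed
  then have "S \<subseteq> C"
    by (auto simp: S_def)
  have "C \<inter> T \<subseteq> S"
  proof
    fix x assume x: "x \<in> C \<inter> T"
    then obtain u where u: "u \<in> I" "x $ 3 = q u"
      by (auto simp: T_def)
    then obtain v where "0 \<le> v" "v < 2 * pi" "x $ 1 = p u * cos v" "x $ 2 = p u * sin v"
      using mem_C x p_pos polar_coordinates_2pi by blast
    then have "x = rev_surf p q u v"
      using u by (simp add: vec_eq_iff forall_3)
    then show "x \<in> S"
      using u \<open>0 \<le> v\<close> \<open>v < 2 * pi\<close> by (force simp: S_def)
  qed
  then have "S = C \<inter> T"
    using \<open>S \<subseteq> C\<close> by (auto simp: S_def T_def)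
  moreover have "open T"
    unfolding T_def by (rule open_vimage_vec_nth[OF assms(1)])
  ultimately show ?thesis
    using \<open>S \<subseteq> C\<close> by (auto simp: S_def openin_open)
qed

lemma mem_sphere_iff_profile:
  fixes x :: "real^3"
  assumes "P > 0" "P^2 + Q^2 = r^2" "r > 0" "x $ 3 = Q"
  shows "x \<in> sphere 0 r \<longleftrightarrow> sqrt ((x $ 1)^2 + (x $ 2)^2) = P"
proof -
  have "x \<in> sphere 0 r \<longleftrightarrow> (x $ 1)^2 + (x $ 2)^2 + Q^2 = r^2"
    using assms(3,4) by (auto simp: norm_eq_sqrt_inner inner_vec_def sum_3 power2_eq_square)
  also have "\<dots> \<longleftrightarrow> (x $ 1)^2 + (x $ 2)^2 = P^2"
    using assms(2) by auto
  also have "\<dots> \<longleftrightarrow> sqrt ((x $ 1)^2 + (x $ 2)^2) = P"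
    using assms(1) by (subst sqrt_eq_iff_eq_power2) auto
  finally show ?thesis .
qed

lemma mem_shifted_catenoid_iff:
  fixes x :: "real^3"
  shows "x \<in> (\<lambda>y. y + vector [0, 0, d]) ` std_catenoid C
    \<longleftrightarrow> sqrt ((x $ 1)^2 + (x $ 2)^2) = C * cosh ((x $ 3 - d) / C)"
proof -
  have "x \<in> (\<lambda>y. y + vector [0, 0, d]) ` std_catenoid C \<longleftrightarrow> x - vector [0, 0, d] \<in> std_catenoid C"
    by (auto intro!: image_eqI[of _ _ "x - vector [0, 0, d]"])
  then show ?thesis
    by (simp add: std_catenoid_def)
qed

lemma is_catenoid_shifted_catenoid:
  "C > 0 \<Longrightarrow> is_catenoid ((\<lambda>y. y + vector [0, 0, d]) ` std_catenoid C)"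
  unfolding is_catenoid_def
  by (intro exI[of _ C] conjI exI[of _ "\<lambda>y. y + vector [0, 0, d]"]) (auto simp: dist_norm)

section \<open>Solutions of the profile equations\<close>

text \<open>A plane curve u \<mapsto> (p u, q u) with unit tangent (c u, s u) and curvature k u.\<close>
locale frenet_curve =
  fixes I :: "real set" and p q c s k :: "real \<Rightarrow> real"
  assumes open_dom: "open I" and convex_dom: "convex I"
    and p_deriv: "\<And>u. u \<in> I \<Longrightarrow> (p has_real_derivative c u) (at u)"
    and q_deriv: "\<And>u. u \<in> I \<Longrightarrow> (q has_real_derivative s u) (at u)"
    and c_deriv: "\<And>u. u \<in> I \<Longrightarrow> (c has_real_derivative - (s u * k u)) (at u)"
    and s_deriv: "\<And>u. u \<in> I \<Longrightarrow> (s has_real_derivative c u * k u) (at u)"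
    and unit_tangent: "\<And>u. u \<in> I \<Longrightarrow> (c u)^2 + (s u)^2 = 1"

text \<open>The two equations that the condition on the Laplacian of the second fundamental form
  imposes on the profile curve of a surface of revolution.\<close>
locale profile_ode = frenet_curve +
  fixes la mu :: real
  assumes nonempty: "I \<noteq> {}"
    and k_nz: "\<And>u. u \<in> I \<Longrightarrow> k u \<noteq> 0"
    and s_nz: "\<And>u. u \<in> I \<Longrightarrow> s u \<noteq> 0"
    and p_pos: "\<And>u. u \<in> I \<Longrightarrow> p u > 0"
    and first_integral: "\<And>u. u \<in> I \<Longrightarrow> la * p u * s u - mu * q u * c u = 2"
    and curvature_eq: "\<And>u. u \<in> I \<Longrightarrow> k u = mu - s u / p u - (la - mu) * (la * p u * s u - 2)"
begin

lemma isCont_p: "u \<in> I \<Longrightarrow> isCont p u"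
  and isCont_s: "u \<in> I \<Longrightarrow> isCont s u"
  using p_deriv s_deriv by (auto intro: DERIV_isCont)

lemma zero_if_mult_c_zero:
  assumes "\<And>u. u \<in> I \<Longrightarrow> isCont X u" "\<And>u. u \<in> I \<Longrightarrow> c u * X u = 0" "u \<in> I"
  shows "X u = 0"
  using zero_if_mult_zero_DERIV_nonzero[OF open_dom c_deriv _ assms] k_nz s_nz by simp

lemma poly_vanishing_on_p_imp_zero:
  assumes "\<And>u. u \<in> I \<Longrightarrow> poly Q (p u) = 0"
  shows "Q = 0"
proof (rule ccontr)
  assume "Q \<noteq> 0"
  obtain u0 where "u0 \<in> I"
    using nonempty by blast
  have "continuous_on I p"
    using isCont_p by (simp add: continuous_at_imp_continuous_on)
  then have "p u = p u0" if "u \<in> I" for u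
    using constant_if_poly_root[OF \<open>Q \<noteq> 0\<close> convex_connected[OF convex_dom]] assms that \<open>u0 \<in> I\<close>
    by blast
  then have "c u = 0" if "u \<in> I" for u
    using DERIV_zero_if_locally_constant[OF p_deriv[OF that] open_dom that] by blast
  then show False
    using zero_if_mult_c_zero[of "\<lambda>_. 1" u0] \<open>u0 \<in> I\<close> by simp
qed

lemma first_integral_deriv:
  assumes "u \<in> I"
  shows "(la - mu) * c u * s u + k u * (la * p u * c u + mu * q u * s u) = 0"
proof -
  have "((\<lambda>u. la * p u * s u - mu * q u * c u) has_real_derivative
      la * c u * s u + la * p u * (c u * k u) - (mu * s u * c u + mu * q u * (-(s u * k u)))) (at u)"
    by (auto intro!: derivative_eq_intros p_deriv[OF assms] q_deriv[OF assms] c_deriv[OF assms]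
        s_deriv[OF assms])
  then have "la * c u * s u + la * p u * (c u * k u) - (mu * s u * c u + mu * q u * (-(s u * k u))) = 0"
    using DERIV_zero_if_locally_constant[OF _ open_dom assms] first_integral by blast
  then show ?thesis
    by (simp add: algebra_simps)
qed

lemma kp_elim_eq: "u \<in> I \<Longrightarrow> k u * p u = kp_elim la mu (p u) (s u)"
  using curvature_eq[of u] p_pos[of u] unfolding kp_elim_def by (simp add: field_simps) algebra

lemma P_elim_vanishes:
  assumes "u \<in> I"
  shows "P_elim la mu (p u) (s u) = 0"
proof -
  define x y z w \<kappa> where "x = p u" and "y = s u" and "z = c u" and "w = q u" and "\<kappa> = k u"
  have e1: "la*x*y - mu*w*z = 2"
    using first_integral[OF assms] by (simp add: x_def y_def z_def w_def)
  have e2: "(la - mu)*z*y + \<kappa>*(la*x*z + mu*w*y) = 0"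
    using first_integral_deriv[OF assms] by (simp add: x_def y_def z_def w_def \<kappa>_def)
  have e3: "\<kappa>*x = kp_elim la mu x y"
    using kp_elim_eq[OF assms] by (simp add: x_def y_def \<kappa>_def)
  have e4: "z^2 + y^2 = 1"
    using unit_tangent[OF assms] by (simp add: z_def y_def)
  have "(la-mu)*(1-y^2)*y + \<kappa>*(la*x - 2*y) = z*((la - mu)*z*y + \<kappa>*(la*x*z + mu*w*y))
      - (la-mu)*y*(z^2+y^2-1) - \<kappa>*la*x*(z^2+y^2-1) + \<kappa>*y*(la*x*y - mu*w*z - 2)"
    by algebra
  then have "(la-mu)*(1-y^2)*y + \<kappa>*(la*x - 2*y) = 0"
    using e1 e2 e4 by simp
  moreover have "P_elim la mu x y
      = x*((la-mu)*(1-y^2)*y + \<kappa>*(la*x - 2*y)) + (kp_elim la mu x y - \<kappa>*x)*(la*x - 2*y)"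
    unfolding P_elim_def kp_elim_def by algebra
  ultimately show ?thesis
    using e3 by (simp add: x_def y_def)
qed

lemma T_elim_vanishes:
  assumes "u \<in> I"
  shows "T_elim la mu (p u) (s u) = 0"
proof (rule zero_if_mult_c_zero[OF _ _ assms])
  fix u assume u: "u \<in> I"
  show "isCont (\<lambda>u. T_elim la mu (p u) (s u)) u"
    unfolding T_elim_def by (intro continuous_intros isCont_p[OF u] isCont_s[OF u])
  have "((\<lambda>u. P_elim la mu (p u) (s u)) has_real_derivative
      P_elim_dx la mu (p u) (s u) * c u + P_elim_dy la mu (p u) (s u) * (c u * k u)) (at u)"
    unfolding P_elim_def P_elim_dx_def P_elim_dy_def
    by (auto intro!: derivative_eq_intros p_deriv[OF u] s_deriv[OF u]) algebra
  then have "P_elim_dx la mu (p u) (s u) * c u + P_elim_dy la mu (p u) (s u) * (c u * k u) = 0"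
    using DERIV_zero_if_locally_constant[OF _ open_dom u] P_elim_vanishes by blast
  moreover have "c u * T_elim la mu (p u) (s u)
      = p u * (P_elim_dx la mu (p u) (s u) * c u + P_elim_dy la mu (p u) (s u) * (c u * k u))"
    unfolding T_elim_eq kp_elim_eq[OF u, symmetric] by algebra
  ultimately show "c u * T_elim la mu (p u) (s u) = 0"
    by simp
qed

text \<open>For la = mu the derivative of the first integral says that the position vector
  is orthogonal to the tangent.\<close>
lemma sphere_case:
  assumes "la = mu"
  shows "\<exists>r>0. \<forall>u\<in>I. (p u)^2 + (q u)^2 = r^2"
proof -
  obtain u0 where "u0 \<in> I"
    using nonempty by blast
  have "la \<noteq> 0"
    using first_integral[OF \<open>u0 \<in> I\<close>] assms by auto
  have "\<exists>R. \<forall>u\<in>I. (p u)^2 + (q u)^2 = R"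
  proof (rule has_field_derivative_zero_constant[OF convex_dom])
    fix u assume u: "u \<in> I"
    have "k u * la * (p u * c u + q u * s u) = 0"
      using first_integral_deriv[OF u] assms by (simp add: algebra_simps)
    then have "2 * (p u * c u + q u * s u) = 0"
      using k_nz[OF u] \<open>la \<noteq> 0\<close> by simp
    moreover have "((\<lambda>u. (p u)^2 + (q u)^2) has_real_derivative 2 * (p u * c u + q u * s u)) (at u)"
      by (auto intro!: derivative_eq_intros p_deriv[OF u] q_deriv[OF u] simp: algebra_simps)
    ultimately show "((\<lambda>u. (p u)^2 + (q u)^2) has_real_derivative 0) (at u within I)"
      by (simp add: has_field_derivative_at_within)
  qed
  then obtain R where R: "\<And>u. u \<in> I \<Longrightarrow> (p u)^2 + (q u)^2 = R"
    by blast
  have "R > 0"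
    using R[OF \<open>u0 \<in> I\<close>] p_pos[OF \<open>u0 \<in> I\<close>] by (metis add_pos_nonneg zero_less_power zero_le_power2)
  then show ?thesis
    using R by (intro exI[of _ "sqrt R"]) auto
qed

text \<open>For mu = 0 the first integral reads p u * s u = c0 with c0 = 2 / la, and the functions
  p u * cosh (q u / c0) - p u * c u * sinh (q u / c0) and
  p u * c u * cosh (q u / c0) - p u * sinh (q u / c0) are constant; eliminating
  c u between them expresses p as a combination of cosh and sinh of q u / c0.\<close>
lemma catenary_first_integrals:
  assumes "mu = 0"
  obtains c0 \<alpha> \<beta> where "c0 \<noteq> 0" "\<alpha>^2 - \<beta>^2 = c0^2"
    "\<And>u. u \<in> I \<Longrightarrow> p u = \<alpha> * cosh (q u / c0) + \<beta> * sinh (q u / c0)"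
proof -
  obtain u0 where "u0 \<in> I"
    using nonempty by blast
  have "la \<noteq> 0"
    using first_integral[OF \<open>u0 \<in> I\<close>] assms by auto
  define c0 where "c0 = 2 / la"
  have "c0 \<noteq> 0"
    using \<open>la \<noteq> 0\<close> by (simp add: c0_def)
  have ps: "p u * s u = c0" if "u \<in> I" for u
    using first_integral[OF that] assms \<open>la \<noteq> 0\<close> by (simp add: c0_def field_simps)
  have kp: "k u * p u = - s u" if "u \<in> I" for u
    using curvature_eq[OF that] first_integral[OF that] p_pos[OF that] assms by simp
  have const_if_deriv_0: "\<exists>\<gamma>. \<forall>u\<in>I. f u = \<gamma>"
    if "\<And>u. u \<in> I \<Longrightarrow> (f has_real_derivative 0) (at u)" for f
    using has_field_derivative_zero_constant[OF convex_dom] that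
    by (simp add: has_field_derivative_at_within)
  obtain \<alpha> where \<alpha>: "\<And>u. u \<in> I \<Longrightarrow> p u * cosh (q u / c0) - p u * c u * sinh (q u / c0) = \<alpha>"
  proof -
    have "((\<lambda>u. p u * cosh (q u / c0) - p u * c u * sinh (q u / c0)) has_real_derivative 0) (at u)"
      if u: "u \<in> I" for u
      using ps[OF u] kp[OF u] unit_tangent[OF u]
      by (auto intro!: derivative_eq_intros p_deriv[OF u] q_deriv[OF u] c_deriv[OF u]
          simp: \<open>c0 \<noteq> 0\<close> field_simps) algebra
    then show ?thesis
      using const_if_deriv_0 that by blast
  qed
  obtain \<beta> where \<beta>: "\<And>u. u \<in> I \<Longrightarrow> p u * c u * cosh (q u / c0) - p u * sinh (q u / c0) = \<beta>"
  proof -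
    have "((\<lambda>u. p u * c u * cosh (q u / c0) - p u * sinh (q u / c0)) has_real_derivative 0) (at u)"
      if u: "u \<in> I" for u
      using ps[OF u] kp[OF u] unit_tangent[OF u]
      by (auto intro!: derivative_eq_intros p_deriv[OF u] q_deriv[OF u] c_deriv[OF u]
          simp: \<open>c0 \<noteq> 0\<close> field_simps) algebra
    then show ?thesis
      using const_if_deriv_0 that by blast
  qed
  have "p u = \<alpha> * cosh (q u / c0) + \<beta> * sinh (q u / c0)" if u: "u \<in> I" for u
  proof -
    have "\<alpha> * cosh (q u / c0) + \<beta> * sinh (q u / c0)
        = p u * (cosh (q u / c0)^2 - sinh (q u / c0)^2)"
      unfolding \<alpha>[OF u, symmetric] \<beta>[OF u, symmetric] by (simp add: algebra_simps power2_eq_square)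
    then show ?thesis
      by (simp add: hyperbolic_pythagoras)
  qed
  moreover have "\<alpha>^2 - \<beta>^2 = c0^2"
  proof -
    have "\<alpha>^2 - \<beta>^2
        = (p u0)^2 * (1 - (c u0)^2) * (cosh (q u0 / c0)^2 - sinh (q u0 / c0)^2)"
      unfolding \<alpha>[OF \<open>u0 \<in> I\<close>, symmetric] \<beta>[OF \<open>u0 \<in> I\<close>, symmetric]
      by (simp add: algebra_simps power2_eq_square)
    also have "\<dots> = (p u0 * s u0)^2"
      using unit_tangent[OF \<open>u0 \<in> I\<close>] by (simp add: hyperbolic_pythagoras power_mult_distrib)
    finally show ?thesis
      using ps[OF \<open>u0 \<in> I\<close>] by simp
  qed
  ultimately show ?thesis
    using that \<open>c0 \<noteq> 0\<close> by blast
qed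

lemma catenoid_case:
  assumes "mu = 0"
  shows "\<exists>C>0. \<exists>d. \<forall>u\<in>I. p u = C * cosh ((q u - d) / C)"
proof -
  obtain c0 \<alpha> \<beta> where "c0 \<noteq> 0" "\<alpha>^2 - \<beta>^2 = c0^2"
    and p_eq: "\<And>u. u \<in> I \<Longrightarrow> p u = \<alpha> * cosh (q u / c0) + \<beta> * sinh (q u / c0)"
    using catenary_first_integrals[OF assms] by blast
  obtain u0 where "u0 \<in> I"
    using nonempty by blast
  then have "\<alpha> * cosh (q u0 / c0) + \<beta> * sinh (q u0 / c0) > 0"
    using p_eq p_pos by simp
  then obtain C d where "C > 0"
    and catenary: "\<And>x. \<alpha> * cosh (x / c0) + \<beta> * sinh (x / c0) = C * cosh ((x - d) / C)"
    using cosh_sinh_combination_eq_catenary[OF \<open>c0 \<noteq> 0\<close> \<open>\<alpha>^2 - \<beta>^2 = c0^2\<close>] by blast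
  have "\<forall>u\<in>I. p u = C * cosh ((q u - d) / C)"
    using p_eq catenary by simp
  then show ?thesis
    using \<open>C > 0\<close> by blast
qed

text \<open>In the remaining cases p would take only finitely many values, because p u and s u
  satisfy the two polynomial equations P_elim la mu x y = 0 and T_elim la mu x y = 0, whose
  resultant in y is a nonzero polynomial in x.\<close>
lemma mu_eq_2la_impossible:
  assumes "mu = 2 * la" "mu \<noteq> 0"
  shows False
proof -
  define Q where "Q = [:-16, 0, 36 * la^2, 0, -20 * la^4, 0, 3 * la^6:]"
  have "poly Q (p u) = 0" if u: "u \<in> I" for u
  proof -
    define x y where "x = p u" and "y = s u"
    have "y \<noteq> 0" "x > 0" "la \<noteq> 0"
      using s_nz[OF u] p_pos[OF u] assms by (auto simp: x_def y_def)
    have "y * (la^3 * x^3 - 2 * la^2 * x^2 * y + la * x * y^2 - 2 * la * x + 2 * y) = 0"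
      using P_elim_vanishes[OF u] P_T_elimination_mu_2la(1)[of la x y] assms(1)
      by (simp add: x_def y_def)
    moreover have "y * (la^5 * x^5 - 4 * la^4 * x^4 * y + 3 * la^3 * x^3 * y^2 + 4 * la^2 * x^2 * y
        - 2 * la * x * y^2 - 4 * y) = 0"
      using T_elim_vanishes[OF u] P_T_elimination_mu_2la(2)[of la x y] assms(1)
      by (simp add: x_def y_def)
    ultimately have "(0 - 4) * la^5 * x^5 * (3 * la^6 * x^6 - 20 * la^4 * x^4 + 36 * la^2 * x^2 - 16) = 0"
      using P_T_elimination_mu_2la(3)[of la x y] \<open>y \<noteq> 0\<close> by simp
    then have "3 * la^6 * x^6 - 20 * la^4 * x^4 + 36 * la^2 * x^2 - 16 = 0"
      using \<open>la \<noteq> 0\<close> \<open>x > 0\<close> by simp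
    moreover have "poly Q x = 3 * la^6 * x^6 - 20 * la^4 * x^4 + 36 * la^2 * x^2 - 16"
      by (simp add: Q_def algebra_simps power2_eq_square power3_eq_cube power4_eq_xxxx) algebra
    ultimately show ?thesis
      by (simp add: x_def)
  qed
  then have "Q = 0"
    by (rule poly_vanishing_on_p_imp_zero)
  then show False
    by (simp add: Q_def)
qed

lemma generic_case_impossible:
  assumes "mu \<noteq> 0" "la \<noteq> mu" "mu \<noteq> 2 * la"
  shows False
proof -
  have "poly (elim_res la mu) (p u) = 0" if u: "u \<in> I" for u
  proof -
    have "(p u)^9 * poly (elim_res la mu) (p u) = 0"
      using P_T_elimination[of la mu "p u" "s u"] P_elim_vanishes[OF u] T_elim_vanishes[OF u]
      by simp
    then show ?thesis
      using p_pos[OF u] by simp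
  qed
  then have "elim_res la mu = 0"
    by (rule poly_vanishing_on_p_imp_zero)
  then have "poly (elim_res la mu) 0 = 0"
    by simp
  then show False
    using assms by (simp add: poly_elim_res_0)
qed

lemma sphere_or_catenoid:
  "(\<exists>r>0. \<forall>u\<in>I. (p u)^2 + (q u)^2 = r^2) \<or> (\<exists>C>0. \<exists>d. \<forall>u\<in>I. p u = C * cosh ((q u - d) / C))"
  using sphere_case catenoid_case mu_eq_2la_impossible generic_case_impossible by blast
theorem rev_surf_openin_sphere_or_catenoid:
  "\<exists>C. (is_catenoid C \<or> is_sphere C)
      \<and> (\<lambda>(u, v). rev_surf p q u v) ` (I \<times> {0..<2*pi}) \<subseteq> C
      \<and> openin (top_of_set C) ((\<lambda>(u, v). rev_surf p q u v) ` (I \<times> {0..<2*pi}))"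
proof -
  have "inj_on q I"
    using inj_on_if_DERIV_nonzero[OF convex_dom q_deriv s_nz] .
  moreover have "continuous_on I q"
    using q_deriv by (auto intro!: continuous_at_imp_continuous_on DERIV_isCont)
  ultimately have "open (q ` I)"
    using injective_into_1d_imp_open_map_UNIV open_dom by blast
  note openin_C = rev_surf_image_openin[where p = p, OF this p_pos]
  from sphere_or_catenoid show ?thesis
  proof (elim disjE exE conjE)
    fix r :: real assume "r > 0" and r: "\<forall>u\<in>I. (p u)^2 + (q u)^2 = r^2"
    have "x \<in> sphere 0 r \<longleftrightarrow> sqrt ((x $ 1)^2 + (x $ 2)^2) = p u"
      if "u \<in> I" "x $ 3 = q u" for u and x :: "real^3"
      using mem_sphere_iff_profile[OF p_pos[OF that(1)] _ \<open>r > 0\<close> that(2)] r that(1) by blast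
    moreover have "is_sphere (sphere (0::real^3) r)"
      using \<open>r > 0\<close> unfolding is_sphere_def by blast
    ultimately show ?thesis
      using openin_C by blast
  next
    fix C d :: real assume "C > 0" and catenary: "\<forall>u\<in>I. p u = C * cosh ((q u - d) / C)"
    have "x \<in> (\<lambda>y. y + vector [0, 0, d]) ` std_catenoid C \<longleftrightarrow> sqrt ((x $ 1)^2 + (x $ 2)^2) = p u"
      if "u \<in> I" "x $ 3 = q u" for u and x :: "real^3"
      using catenary that by (simp add: mem_shifted_catenoid_iff)
    moreover have "is_catenoid ((\<lambda>y. y + vector [0, 0, d]) ` std_catenoid C)"
      using is_catenoid_shifted_catenoid[OF \<open>C > 0\<close>] .
    ultimately show ?thesis
      using openin_C by blast
  qed
qed

end

section \<open>The Laplacian of the second fundamental form of a surface of revolution\<close>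

lemma vector3_has_vector_derivative:
  assumes "(f1 has_real_derivative d1) (at x)" "(f2 has_real_derivative d2) (at x)"
    "(f3 has_real_derivative d3) (at x)"
  shows "((\<lambda>s. vector [f1 s, f2 s, f3 s] :: real^3) has_vector_derivative vector [d1, d2, d3]) (at x)"
proof -
  have coords: "(vector [a, b, c] :: real^3)
      = a *\<^sub>R vector [1, 0, 0] + b *\<^sub>R vector [0, 1, 0] + c *\<^sub>R vector [0, 0, 1]" for a b c
    by (simp add: vec_eq_iff forall_3)
  have "((\<lambda>s. f1 s *\<^sub>R (vector [1, 0, 0] :: real^3) + f2 s *\<^sub>R vector [0, 1, 0]
        + f3 s *\<^sub>R vector [0, 0, 1]) has_vector_derivative
      (f1 x *\<^sub>R 0 + d1 *\<^sub>R vector [1, 0, 0] + (f2 x *\<^sub>R 0 + d2 *\<^sub>R vector [0, 1, 0]))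
        + (f3 x *\<^sub>R 0 + d3 *\<^sub>R vector [0, 0, 1])) (at x)"
    by (intro has_vector_derivative_add has_vector_derivative_scaleR assms has_vector_derivative_const)
  then show ?thesis
    by (simp flip: coords)
qed

lemma vector3_cong: "a = a' \<Longrightarrow> b = b' \<Longrightarrow> c = c' \<Longrightarrow> (vector [a, b, c] :: real^3) = vector [a', b', c']"
  by simp

lemma cross3_vector3: "cross3 (vector [a1, a2, a3]) (vector [b1, b2, b3]) =
   vector [a2 * b3 - a3 * b2, a3 * b1 - a1 * b3, a1 * b2 - a2 * b1]"
  by (simp add: cross3_def)

lemma inner_vector3:
  "(vector [a1, a2, a3] :: real^3) \<bullet> vector [b1, b2, b3] = a1 * b1 + a2 * b2 + a3 * b3"
  by (simp add: inner_vec_def sum_3)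

lemma norm_vector3: "norm (vector [a1, a2, a3] :: real^3) = sqrt (a1^2 + a2^2 + a3^2)"
  by (simp add: norm_eq_sqrt_inner inner_vector3 power2_eq_square)

lemma scaleR_vector3: "r *\<^sub>R (vector [a1, a2, a3] :: real^3) = vector [r * a1, r * a2, r * a3]"
  by (simp add: vec_eq_iff forall_3)

lemma pd_1_eqI:
  assumes "open S" "u \<in> S" "\<And>s. s \<in> S \<Longrightarrow> f s v = g s" "(g has_vector_derivative d) (at u)"
  shows "pd 1 f u v = d"
proof -
  have "((\<lambda>s. f s v) has_vector_derivative d) (at u)"
    by (rule has_vector_derivative_transform_within_open[OF assms(4,1,2)]) (simp add: assms(3))
  then show ?thesis
    by (simp add: pd_def vector_derivative_at)
qed

lemma pd_2_eqI: "((\<lambda>t. f u t) has_vector_derivative d) (at v) \<Longrightarrow> pd 2 f u v = d"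
  by (simp add: pd_def vector_derivative_at)

lemma pd_1_real_eqI:
  fixes f :: "real \<Rightarrow> real \<Rightarrow> real"
  assumes "open S" "u \<in> S" "\<And>s. s \<in> S \<Longrightarrow> f s v = g s" "(g has_real_derivative d) (at u)"
  shows "pd 1 f u v = d"
  by (rule pd_1_eqI[OF assms(1,2), where g = g])
    (use assms(3,4) in \<open>simp_all add: has_real_derivative_iff_has_vector_derivative\<close>)

lemma pd_2_real_eqI:
  fixes f :: "real \<Rightarrow> real \<Rightarrow> real"
  shows "((\<lambda>t. f u t) has_real_derivative d) (at v) \<Longrightarrow> pd 2 f u v = d"
  using pd_2_eqI by (simp add: has_real_derivative_iff_has_vector_derivative)

lemma has_real_derivative_sqrt_abs:
  assumes "(g has_real_derivative d) (at x)" "g x \<noteq> 0"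
  shows "((\<lambda>x. sqrt \<bar>g x\<bar>) has_real_derivative sgn (g x) * d / (2 * sqrt \<bar>g x\<bar>)) (at x)"
proof -
  have D: "((\<lambda>x. sqrt (sqrt ((g x)^2))) has_real_derivative
      inverse (sqrt (sqrt ((g x)^2))) / 2 * (inverse (sqrt ((g x)^2)) / 2 * (2 * g x * d))) (at x)"
    using assms by (intro DERIV_chain2[OF DERIV_real_sqrt] DERIV_chain2[OF DERIV_real_sqrt])
      (auto intro!: derivative_eq_intros)
  have V: "inverse (sqrt (sqrt ((g x)^2))) / 2 * (inverse (sqrt ((g x)^2)) / 2 * (2 * g x * d))
      = sgn (g x) * d / (2 * sqrt \<bar>g x\<bar>)"
  proof -
    have "sqrt \<bar>g x\<bar> > 0" "g x / \<bar>g x\<bar> = sgn (g x)"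
      using assms(2) by (auto simp: sgn_if)
    then show ?thesis
      unfolding real_sqrt_abs using assms(2) by (simp add: field_simps)
  qed
  show ?thesis
    using D[unfolded V] unfolding real_sqrt_abs .
qed

text \<open>The shape of the Laplacian of the second fundamental form in coordinates where it is
  diagonal, with G its determinant and E a coefficient of the gradient.\<close>
lemma sqrt_abs_weighted_divergence:
  fixes G G' E E' T :: real
  assumes "G \<noteq> 0"
  shows "- (1 / sqrt \<bar>G\<bar>) * ((sgn G * G' / (2 * sqrt \<bar>G\<bar>) * E + sqrt \<bar>G\<bar> * E') - sqrt \<bar>G\<bar> * T)
     = - (G' / (2 * G)) * E - E' + T"
proof -
  define W where "W = sqrt \<bar>G\<bar>"
  have "W > 0" "W * W = \<bar>G\<bar>"
    using assms by (simp_all add: W_def)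
  then have "sgn G / (W * W) = 1 / G"
    using assms by (simp add: sgn_if)
  moreover have "- (1 / W) * ((sgn G * G' / (2 * W) * E + W * E') - W * T)
      = - (sgn G / (W * W)) * G' * E / 2 - E' + T"
    using \<open>W > 0\<close> by (simp add: field_simps)
  ultimately show ?thesis
    unfolding W_def[symmetric] by simp
qed

locale profile_curve =
  fixes I :: "real set" and p q p' q' p'' q'' p''' q''' :: "real \<Rightarrow> real"
  assumes open_I: "open I" and convex_I: "convex I"
    and deriv_p: "\<And>u. u \<in> I \<Longrightarrow> (p has_real_derivative p' u) (at u)"
    and deriv_p': "\<And>u. u \<in> I \<Longrightarrow> (p' has_real_derivative p'' u) (at u)"
    and deriv_p'': "\<And>u. u \<in> I \<Longrightarrow> (p'' has_real_derivative p''' u) (at u)"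
    and deriv_q: "\<And>u. u \<in> I \<Longrightarrow> (q has_real_derivative q' u) (at u)"
    and deriv_q': "\<And>u. u \<in> I \<Longrightarrow> (q' has_real_derivative q'' u) (at u)"
    and deriv_q'': "\<And>u. u \<in> I \<Longrightarrow> (q'' has_real_derivative q''' u) (at u)"
    and unit_speed: "\<And>u. u \<in> I \<Longrightarrow> (p' u)^2 + (q' u)^2 = 1"
    and radius_pos: "\<And>u. u \<in> I \<Longrightarrow> p u > 0"
begin

abbreviation X :: "real \<Rightarrow> real \<Rightarrow> real^3" where
  "X \<equiv> rev_surf p q"

definition curvature :: "real \<Rightarrow> real" where
  "curvature u = p' u * q'' u - p'' u * q' u"

definition curvature' :: "real \<Rightarrow> real" where
  "curvature' u = p' u * q''' u - p''' u * q' u"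

lemma has_deriv_curvature:
  assumes "u \<in> I"
  shows "(curvature has_real_derivative curvature' u) (at u)"
  unfolding curvature_def curvature'_def
  by (auto intro!: derivative_eq_intros deriv_p'[OF assms] deriv_q'[OF assms] deriv_p''[OF assms]
      deriv_q''[OF assms] simp: algebra_simps)

lemma tangent_orthogonal_acceleration:
  assumes "u \<in> I"
  shows "p' u * p'' u + q' u * q'' u = 0"
proof -
  have "((\<lambda>u. (p' u)^2 + (q' u)^2) has_real_derivative 2 * (p' u * p'' u + q' u * q'' u)) (at u)"
    by (auto intro!: derivative_eq_intros deriv_p'[OF assms] deriv_q'[OF assms] simp: algebra_simps)
  then have "2 * (p' u * p'' u + q' u * q'' u) = 0"
    using DERIV_zero_if_locally_constant[OF _ open_I assms] unit_speed by blast
  then show ?thesis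
    by simp
qed

lemma tangent_orthogonal_acceleration_deriv:
  assumes "u \<in> I"
  shows "(p'' u)^2 + p' u * p''' u + (q'' u)^2 + q' u * q''' u = 0"
proof -
  have "((\<lambda>u. p' u * p'' u + q' u * q'' u) has_real_derivative
      (p'' u)^2 + p' u * p''' u + (q'' u)^2 + q' u * q''' u) (at u)"
    by (auto intro!: derivative_eq_intros deriv_p'[OF assms] deriv_q'[OF assms] deriv_p''[OF assms]
        deriv_q''[OF assms] simp: algebra_simps power2_eq_square)
  then show ?thesis
    using DERIV_zero_if_locally_constant[OF _ open_I assms] tangent_orthogonal_acceleration by blast
qed

lemma frenet:
  assumes "u \<in> I"
  shows "p'' u = - (q' u * curvature u)" and "q'' u = p' u * curvature u"
proof -
  have "p'' u + q' u * curvature u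
      = p' u * (p' u * p'' u + q' u * q'' u) - p'' u * ((p' u)^2 + (q' u)^2 - 1)"
    and "q'' u - p' u * curvature u
      = q' u * (p' u * p'' u + q' u * q'' u) - q'' u * ((p' u)^2 + (q' u)^2 - 1)"
    unfolding curvature_def by algebra+
  then show "p'' u = - (q' u * curvature u)" and "q'' u = p' u * curvature u"
    using tangent_orthogonal_acceleration[OF assms] unit_speed[OF assms] by simp_all
qed

lemma frenet_deriv:
  assumes "u \<in> I"
  shows "p''' u = - (p' u * (curvature u)^2) - q' u * curvature' u"
    and "q''' u = - (q' u * (curvature u)^2) + p' u * curvature' u"
proof -
  have "(p'' u)^2 + (q'' u)^2 = (curvature u)^2"
    using unit_speed[OF assms] unfolding frenet[OF assms] by algebra
  then have e: "p' u * p''' u + q' u * q''' u = - ((curvature u)^2)"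
    using tangent_orthogonal_acceleration_deriv[OF assms] by simp
  have "p''' u = p' u * (p' u * p''' u + q' u * q''' u) - q' u * curvature' u
      - p''' u * ((p' u)^2 + (q' u)^2 - 1)"
    and "q''' u = q' u * (p' u * p''' u + q' u * q''' u) + p' u * curvature' u
      - q''' u * ((p' u)^2 + (q' u)^2 - 1)"
    unfolding curvature'_def by algebra+
  then show "p''' u = - (p' u * (curvature u)^2) - q' u * curvature' u"
    and "q''' u = - (q' u * (curvature u)^2) + p' u * curvature' u"
    using e unit_speed[OF assms] by simp_all
qed

lemma frenet_curve: "frenet_curve I p q p' q' curvature"
proof (unfold_locales)
  fix u assume "u \<in> I"
  show "(p' has_real_derivative - (q' u * curvature u)) (at u)"
    using deriv_p'[OF \<open>u \<in> I\<close>] unfolding frenet[OF \<open>u \<in> I\<close>] .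
  show "(q' has_real_derivative p' u * curvature u) (at u)"
    using deriv_q'[OF \<open>u \<in> I\<close>] unfolding frenet[OF \<open>u \<in> I\<close>] .
qed (fact open_I convex_I deriv_p deriv_q unit_speed)+

lemma pd_rev_surf:
  assumes "u \<in> I"
  shows "pd 1 X u v = vector [p' u * cos v, p' u * sin v, q' u]"
    and "pd 2 X u v = vector [- (p u * sin v), p u * cos v, 0]"
    and "pd 1 (pd 1 X) u v = vector [p'' u * cos v, p'' u * sin v, q'' u]"
    and "pd 2 (pd 1 X) u v = vector [- (p' u * sin v), p' u * cos v, 0]"
    and "pd 1 (pd 2 X) u v = vector [- (p' u * sin v), p' u * cos v, 0]"
    and "pd 2 (pd 2 X) u v = vector [- (p u * cos v), - (p u * sin v), 0]"
proof -
  have X_u: "pd 1 X s v = vector [p' s * cos v, p' s * sin v, q' s]" if "s \<in> I" for s v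
    by (rule pd_1_eqI[OF open_I that, where g = "\<lambda>s. vector [p s * cos v, p s * sin v, q s]"])
      (auto simp: rev_surf_def intro!: vector3_has_vector_derivative derivative_eq_intros
        deriv_p[OF that] deriv_q[OF that])
  have X_v: "pd 2 X s v = vector [- (p s * sin v), p s * cos v, 0]" for s v
    unfolding rev_surf_def by (rule pd_2_eqI) (auto intro!: vector3_has_vector_derivative derivative_eq_intros)
  show "pd 1 X u v = vector [p' u * cos v, p' u * sin v, q' u]"
    using X_u[OF assms] .
  show "pd 2 X u v = vector [- (p u * sin v), p u * cos v, 0]"
    using X_v .
  show "pd 1 (pd 1 X) u v = vector [p'' u * cos v, p'' u * sin v, q'' u]"
    by (rule pd_1_eqI[OF open_I assms, where g = "\<lambda>s. vector [p' s * cos v, p' s * sin v, q' s]"])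
      (use X_u in \<open>auto intro!: vector3_has_vector_derivative derivative_eq_intros
        deriv_p'[OF assms] deriv_q'[OF assms]\<close>)
  have "(\<lambda>t. pd 1 X u t) = (\<lambda>t. vector [p' u * cos t, p' u * sin t, q' u])"
    using X_u[OF assms] by (intro ext) simp
  then show "pd 2 (pd 1 X) u v = vector [- (p' u * sin v), p' u * cos v, 0]"
    by (intro pd_2_eqI) (auto intro!: vector3_has_vector_derivative derivative_eq_intros)
  show "pd 1 (pd 2 X) u v = vector [- (p' u * sin v), p' u * cos v, 0]"
    by (rule pd_1_eqI[OF open_I assms, where g = "\<lambda>s. vector [- (p s * sin v), p s * cos v, 0]"])
      (use X_v in \<open>auto intro!: vector3_has_vector_derivative derivative_eq_intros deriv_p[OF assms]\<close>)
  show "pd 2 (pd 2 X) u v = vector [- (p u * cos v), - (p u * sin v), 0]"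
    by (rule pd_2_eqI) (auto simp: X_v intro!: vector3_has_vector_derivative derivative_eq_intros)
qed

lemma unit_normal_rev_surf:
  assumes "u \<in> I"
  shows "unit_normal X u v = vector [- (q' u * cos v), - (q' u * sin v), p' u]"
proof -
  have cross: "cross3 (pd 1 X u v) (pd 2 X u v)
      = vector [- (p u * q' u * cos v), - (p u * q' u * sin v), p u * p' u]"
    unfolding pd_rev_surf[OF assms] cross3_vector3
    by (rule vector3_cong) (use sin_cos_squared_add[of v] in algebra)+
  have "norm (vector [- (p u * q' u * cos v), - (p u * q' u * sin v), p u * p' u] :: real^3)
      = sqrt ((p u)^2)"
    unfolding norm_vector3
    by (rule arg_cong[where f = sqrt]) (use sin_cos_squared_add[of v] unit_speed[OF assms] in algebra)
  also have "\<dots> = p u"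
    using radius_pos[OF assms] by simp
  finally show ?thesis
    unfolding unit_normal_def Let_def cross scaleR_vector3
    using radius_pos[OF assms] by (intro vector3_cong) (simp_all add: field_simps)
qed

lemma sff_rev_surf:
  assumes "u \<in> I"
  shows "sff X 1 1 u v = curvature u" "sff X 1 2 u v = 0" "sff X 2 1 u v = 0"
    "sff X 2 2 u v = p u * q' u"
  unfolding sff_def pd_rev_surf[OF assms] unit_normal_rev_surf[OF assms] inner_vector3 curvature_def
  by (use sin_cos_squared_add[of v] in algebra)+

lemma fff_rev_surf:
  assumes "u \<in> I"
  shows "fff X 1 1 u v = 1" "fff X 1 2 u v = 0" "fff X 2 1 u v = 0" "fff X 2 2 u v = (p u)^2"
  unfolding fff_def pd_rev_surf[OF assms] inner_vector3
  by (use sin_cos_squared_add[of v] unit_speed[OF assms] in algebra)+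

lemma gauss_curv_rev_surf:
  assumes "u \<in> I"
  shows "gauss_curv X u v = curvature u * q' u / p u"
  unfolding gauss_curv_def det2_def sff_rev_surf[OF assms] fff_rev_surf[OF assms]
  using radius_pos[OF assms] by (simp add: power2_eq_square)

end

locale nondegenerate_profile = profile_curve +
  assumes curvature_nz: "\<And>u. u \<in> I \<Longrightarrow> curvature u \<noteq> 0"
    and q'_nz: "\<And>u. u \<in> I \<Longrightarrow> q' u \<noteq> 0"
begin

definition sff_det :: "real \<Rightarrow> real" where
  "sff_det u = curvature u * p u * q' u"

definition sff_det' :: "real \<Rightarrow> real" where
  "sff_det' u = curvature' u * p u * q' u + curvature u * p' u * q' u + curvature u * p u * q'' u"

definition laplace_radial :: "real \<Rightarrow> real" where
  "laplace_radial u = - (sff_det' u / (2 * sff_det u)) * (p' u / curvature u)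
     - (p'' u * curvature u - p' u * curvature' u) / (curvature u)^2 + 1 / q' u"

definition laplace_axial :: "real \<Rightarrow> real" where
  "laplace_axial u = - (sff_det' u / (2 * sff_det u)) * (q' u / curvature u)
     - (q'' u * curvature u - q' u * curvature' u) / (curvature u)^2"

definition flux :: "(real \<Rightarrow> real \<Rightarrow> real) \<Rightarrow> nat \<Rightarrow> real \<Rightarrow> real \<Rightarrow> real" where
  "flux f i u v = sqrt \<bar>det2 (\<lambda>k l. sff X k l u v)\<bar> *
     (\<Sum>j\<in>{1,2}. inv2 (\<lambda>k l. sff X k l u v) i j * pd j f u v)"

lemma sff_det_nz: "u \<in> I \<Longrightarrow> sff_det u \<noteq> 0"
  using curvature_nz q'_nz radius_pos by (fastforce simp: sff_det_def)

lemma has_deriv_sff_det: "u \<in> I \<Longrightarrow> (sff_det has_real_derivative sff_det' u) (at u)"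
  unfolding sff_det_def sff_det'_def
  by (auto intro!: derivative_eq_intros has_deriv_curvature deriv_p deriv_q' simp: algebra_simps)

lemma det2_sff_rev_surf:
  assumes "u \<in> I"
  shows "det2 (\<lambda>k l. sff X k l u v) = sff_det u"
  unfolding det2_def sff_det_def sff_rev_surf[OF assms] by simp

lemma laplace_II_eq_flux:
  "laplace_II X f u v = - (1 / sqrt \<bar>det2 (\<lambda>k l. sff X k l u v)\<bar>) * (pd 1 (flux f 1) u v + pd 2 (flux f 2) u v)"
  unfolding laplace_II_def flux_def by simp

lemma flux_rev_surf:
  assumes "u \<in> I"
  shows "flux f 1 u v = sqrt \<bar>sff_det u\<bar> * (pd 1 f u v / curvature u)"
    and "flux f 2 u v = sqrt \<bar>sff_det u\<bar> * (pd 2 f u v / (p u * q' u))"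
  using curvature_nz[OF assms] q'_nz[OF assms] radius_pos[OF assms]
  by (simp_all add: flux_def inv2_def det2_sff_rev_surf[OF assms]
      sff_rev_surf[OF assms, unfolded One_nat_def] sff_det_def)

lemma laplace_II_rev_surf_x1:
  assumes "u \<in> I"
  shows "laplace_II X (\<lambda>u v. X u v $ 1) u v = laplace_radial u * cos v"
proof -
  define W where "W = (\<lambda>s. sqrt \<bar>sff_det s\<bar>)"
  define W' where "W' = sgn (sff_det u) * sff_det' u / (2 * W u)"
  define E' where "E' = (p'' u * curvature u - p' u * curvature' u) / (curvature u)^2"
  have "pd 1 (flux (\<lambda>u v. X u v $ 1) 1) u v = (W' * (p' u / curvature u) + E' * W u) * cos v"
  proof (rule pd_1_real_eqI[OF open_I assms, where g = "\<lambda>s. W s * (p' s / curvature s) * cos v"])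
    fix s assume "s \<in> I"
    have "pd 1 (\<lambda>u v. X u v $ 1) s v = p' s * cos v"
      by (rule pd_1_real_eqI[OF open_I \<open>s \<in> I\<close>, where g = "\<lambda>s. p s * cos v"])
        (auto intro!: derivative_eq_intros deriv_p[OF \<open>s \<in> I\<close>])
    then show "flux (\<lambda>u v. X u v $ 1) 1 s v = W s * (p' s / curvature s) * cos v"
      unfolding flux_rev_surf(1)[OF \<open>s \<in> I\<close>] W_def by simp
  next
    have "(W has_real_derivative W') (at u)"
      using has_real_derivative_sqrt_abs[OF has_deriv_sff_det[OF assms] sff_det_nz[OF assms]]
      by (simp add: W_def W'_def)
    moreover have "((\<lambda>s. p' s / curvature s) has_real_derivative E') (at u)"
      unfolding E'_def using curvature_nz[OF assms]
      by (auto intro!: derivative_eq_intros has_deriv_curvature[OF assms] deriv_p'[OF assms]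
          simp: power2_eq_square)
    ultimately show "((\<lambda>s. W s * (p' s / curvature s) * cos v) has_real_derivative
        (W' * (p' u / curvature u) + E' * W u) * cos v) (at u)"
      by (intro DERIV_cmult_right DERIV_mult)
  qed
  moreover have "pd 2 (flux (\<lambda>u v. X u v $ 1) 2) u v = - (W u / q' u) * cos v"
  proof -
    have "pd 2 (\<lambda>u v. X u v $ 1) u t = - (p u * sin t)" for t
      by (rule pd_2_real_eqI) (auto intro!: derivative_eq_intros)
    then have "(\<lambda>t. flux (\<lambda>u v. X u v $ 1) 2 u t) = (\<lambda>t. - (W u / q' u) * sin t)"
      using radius_pos[OF assms] by (simp add: flux_rev_surf[OF assms] W_def)
    then show ?thesis
      using q'_nz[OF assms] by (intro pd_2_real_eqI) (auto intro!: derivative_eq_intros)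
  qed
  ultimately have "laplace_II X (\<lambda>u v. X u v $ 1) u v
      = - (1 / sqrt \<bar>sff_det u\<bar>) * ((W' * (p' u / curvature u) + sqrt \<bar>sff_det u\<bar> * E')
        - sqrt \<bar>sff_det u\<bar> * (1 / q' u)) * cos v"
    by (simp add: laplace_II_eq_flux det2_sff_rev_surf[OF assms] W_def algebra_simps)
  also have "\<dots> = laplace_radial u * cos v"
    unfolding W'_def W_def sqrt_abs_weighted_divergence[OF sff_det_nz[OF assms]]
    by (simp add: laplace_radial_def E'_def)
  finally show ?thesis .
qed

lemma laplace_II_rev_surf_x3:
  assumes "u \<in> I"
  shows "laplace_II X (\<lambda>u v. X u v $ 3) u v = laplace_axial u"
proof -
  define W where "W = (\<lambda>s. sqrt \<bar>sff_det s\<bar>)"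
  define W' where "W' = sgn (sff_det u) * sff_det' u / (2 * W u)"
  define E' where "E' = (q'' u * curvature u - q' u * curvature' u) / (curvature u)^2"
  have "pd 1 (flux (\<lambda>u v. X u v $ 3) 1) u v = W' * (q' u / curvature u) + E' * W u"
  proof (rule pd_1_real_eqI[OF open_I assms, where g = "\<lambda>s. W s * (q' s / curvature s)"])
    fix s assume "s \<in> I"
    have "pd 1 (\<lambda>u v. X u v $ 3) s v = q' s"
      by (rule pd_1_real_eqI[OF open_I \<open>s \<in> I\<close>, where g = q]) (auto intro: deriv_q[OF \<open>s \<in> I\<close>])
    then show "flux (\<lambda>u v. X u v $ 3) 1 s v = W s * (q' s / curvature s)"
      unfolding flux_rev_surf(1)[OF \<open>s \<in> I\<close>] W_def by simp
  next
    have "(W has_real_derivative W') (at u)"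
      using has_real_derivative_sqrt_abs[OF has_deriv_sff_det[OF assms] sff_det_nz[OF assms]]
      by (simp add: W_def W'_def)
    moreover have "((\<lambda>s. q' s / curvature s) has_real_derivative E') (at u)"
      unfolding E'_def using curvature_nz[OF assms]
      by (auto intro!: derivative_eq_intros has_deriv_curvature[OF assms] deriv_q'[OF assms]
          simp: power2_eq_square)
    ultimately show "((\<lambda>s. W s * (q' s / curvature s)) has_real_derivative
        W' * (q' u / curvature u) + E' * W u) (at u)"
      by (rule DERIV_mult)
  qed
  moreover have "pd 2 (flux (\<lambda>u v. X u v $ 3) 2) u v = 0"
  proof -
    have "pd 2 (\<lambda>u v. X u v $ 3) u t = 0" for t
      by (rule pd_2_real_eqI) (auto intro!: derivative_eq_intros)
    then have "(\<lambda>t. flux (\<lambda>u v. X u v $ 3) 2 u t) = (\<lambda>t. 0)"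
      by (simp add: flux_rev_surf[OF assms])
    then show ?thesis
      by (intro pd_2_real_eqI) (auto intro!: derivative_eq_intros)
  qed
  ultimately have "laplace_II X (\<lambda>u v. X u v $ 3) u v
      = - (1 / sqrt \<bar>sff_det u\<bar>) * ((W' * (q' u / curvature u) + sqrt \<bar>sff_det u\<bar> * E')
        - sqrt \<bar>sff_det u\<bar> * 0)"
    by (simp add: laplace_II_eq_flux det2_sff_rev_surf[OF assms] W_def)
  also have "\<dots> = laplace_axial u"
    unfolding W'_def W_def sqrt_abs_weighted_divergence[OF sff_det_nz[OF assms]]
    by (simp add: laplace_axial_def E'_def)
  finally show ?thesis .
qed

text \<open>The first and third components of the equation, evaluated on the meridians v = 0 and
  v = pi, isolate the coefficients A 1 1 and A 3 3.\<close>
lemma laplace_eq_imp_radial_axial: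
  assumes eq: "\<forall>u\<in>I. \<forall>v\<in>{0..<2*pi}. (\<chi> k. laplace_II X (\<lambda>u' v'. X u' v' $ k) u v) = A *v X u v"
    and "u \<in> I"
  shows "laplace_radial u = A $ 1 $ 1 * p u" and "laplace_axial u = A $ 3 $ 3 * q u"
proof -
  have components: "laplace_radial u * cos v = A$1$1 * (p u * cos v) + A$1$2 * (p u * sin v) + A$1$3 * q u"
    "laplace_axial u = A$3$1 * (p u * cos v) + A$3$2 * (p u * sin v) + A$3$3 * q u"
    if "v \<in> {0..<2*pi}" for v
  proof -
    have "(\<chi> k. laplace_II X (\<lambda>u' v'. X u' v' $ k) u v) = A *v X u v"
      using eq \<open>u \<in> I\<close> that by blast
    from arg_cong[OF this, of "\<lambda>z. z $ 1"] arg_cong[OF this, of "\<lambda>z. z $ 3"]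
    show "laplace_radial u * cos v = A$1$1 * (p u * cos v) + A$1$2 * (p u * sin v) + A$1$3 * q u"
      "laplace_axial u = A$3$1 * (p u * cos v) + A$3$2 * (p u * sin v) + A$3$3 * q u"
      by (simp_all add: matrix_vector_mult_def sum_3 laplace_II_rev_surf_x1[OF \<open>u \<in> I\<close>, simplified]
          laplace_II_rev_surf_x3[OF \<open>u \<in> I\<close>, simplified])
  qed
  have "0 \<in> {0..<2*pi}" "pi \<in> {0..<2*pi}"
    by auto
  from components[OF this(1)] components[OF this(2)]
  show "laplace_radial u = A $ 1 $ 1 * p u" and "laplace_axial u = A $ 3 $ 3 * q u"
    by simp_all
qed

lemma first_integral_of_radial_axial:
  assumes "u \<in> I" "laplace_radial u = la * p u" "laplace_axial u = mu * q u"
  shows "la * p u * q' u - mu * q u * p' u = 2"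
proof -
  have "p' u * laplace_axial u - q' u * laplace_radial u
      = - (p' u * q'' u - q' u * p'' u) / curvature u - 1"
    using curvature_nz[OF assms(1)] q'_nz[OF assms(1)]
    unfolding laplace_radial_def laplace_axial_def by (simp add: field_simps power2_eq_square)
  also have "\<dots> = -2"
  proof -
    have "p' u * q'' u - q' u * p'' u = curvature u"
      by (simp add: curvature_def mult.commute)
    then show ?thesis
      using curvature_nz[OF assms(1)] by simp
  qed
  finally show ?thesis
    using assms(2,3) by (simp add: algebra_simps)
qed

lemma first_integral_derivatives:
  assumes radial_axial: "\<And>u. u \<in> I \<Longrightarrow> laplace_radial u = la * p u \<and> laplace_axial u = mu * q u"
    and "u \<in> I"
  shows "la * (p' u * q' u + p u * q'' u) - mu * (q' u * p' u + q u * p'' u) = 0"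
    and "la * (p'' u * q' u + 2 * p' u * q'' u + p u * q''' u)
      - mu * (q'' u * p' u + 2 * q' u * p'' u + q u * p''' u) = 0"
proof -
  have first: "la * (p' u * q' u + p u * q'' u) - mu * (q' u * p' u + q u * p'' u) = 0"
    if u: "u \<in> I" for u
  proof -
    have "((\<lambda>u. la * p u * q' u - mu * q u * p' u) has_real_derivative
        la * (p' u * q' u + p u * q'' u) - mu * (q' u * p' u + q u * p'' u)) (at u)"
      by (auto intro!: derivative_eq_intros deriv_p[OF u] deriv_q[OF u] deriv_p'[OF u] deriv_q'[OF u]
          simp: algebra_simps)
    moreover have "la * p v * q' v - mu * q v * p' v = 2" if "v \<in> I" for v
      using first_integral_of_radial_axial that radial_axial[OF that] by blast
    ultimately show ?thesis
      using DERIV_zero_if_locally_constant[OF _ open_I u] by blast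
  qed
  then show "la * (p' u * q' u + p u * q'' u) - mu * (q' u * p' u + q u * p'' u) = 0"
    using \<open>u \<in> I\<close> .
  have "((\<lambda>u. la * (p' u * q' u + p u * q'' u) - mu * (q' u * p' u + q u * p'' u)) has_real_derivative
      la * (p'' u * q' u + 2 * p' u * q'' u + p u * q''' u)
        - mu * (q'' u * p' u + 2 * q' u * p'' u + q u * p''' u)) (at u)"
    using \<open>u \<in> I\<close> by (auto intro!: derivative_eq_intros deriv_p deriv_q deriv_p' deriv_q' deriv_p'' deriv_q''
        simp: algebra_simps)
  then show "la * (p'' u * q' u + 2 * p' u * q'' u + p u * q''' u)
      - mu * (q'' u * p' u + 2 * q' u * p'' u + q u * p''' u) = 0"
    using DERIV_zero_if_locally_constant[OF _ open_I \<open>u \<in> I\<close>] first by blast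
qed

text \<open>The curvature equation is a polynomial consequence of the first integral, its first two
  derivatives, the axial equation and the unit speed condition; the identity for T below
  exhibits the combination.\<close>
lemma curvature_eq_of_radial_axial:
  assumes radial_axial: "\<And>u. u \<in> I \<Longrightarrow> laplace_radial u = la * p u \<and> laplace_axial u = mu * q u"
    and "u \<in> I"
  shows "curvature u = mu - q' u / p u - (la - mu) * (la * p u * q' u - 2)"
proof -
  define x y z w \<kappa> \<kappa>' where "x = p u" and "y = q' u" and "z = p' u" and "w = q u"
    and "\<kappa> = curvature u" and "\<kappa>' = curvature' u"
  have "x \<noteq> 0" "y \<noteq> 0" "\<kappa> \<noteq> 0"
    using radius_pos[OF \<open>u \<in> I\<close>] q'_nz[OF \<open>u \<in> I\<close>] curvature_nz[OF \<open>u \<in> I\<close>]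
    by (auto simp: x_def y_def \<kappa>_def)
  note frenet = frenet[OF \<open>u \<in> I\<close>] frenet_deriv[OF \<open>u \<in> I\<close>]
  note H = first_integral_derivatives[OF radial_axial \<open>u \<in> I\<close>]
  have h1: "la*x*y - mu*w*z - 2 = 0"
    using first_integral_of_radial_axial[OF \<open>u \<in> I\<close>] radial_axial[OF \<open>u \<in> I\<close>]
    by (simp add: x_def y_def z_def w_def)
  have unit: "z^2 + y^2 - 1 = 0"
    using unit_speed[OF \<open>u \<in> I\<close>] by (simp add: z_def y_def)
  have h2: "(la-mu)*z*y + \<kappa>*(la*x*z + mu*w*y) = 0"
    using H(1) frenet by (simp add: x_def y_def z_def w_def \<kappa>_def algebra_simps)
  have h2': "la*(-(y^2*\<kappa>) + 2*z^2*\<kappa> - x*y*\<kappa>^2) - mu*(z^2*\<kappa> - 2*y^2*\<kappa> - w*z*\<kappa>^2)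
      + \<kappa>'*(la*x*z + mu*w*y) = 0"
    using H(2) frenet by (simp add: x_def y_def z_def w_def \<kappa>_def \<kappa>'_def algebra_simps power2_eq_square)
  have axial: "x*y*\<kappa>' - \<kappa>*z*y - 3*\<kappa>^2*x*z - 2*mu*w*\<kappa>^2*x = 0"
  proof -
    have "laplace_axial u * (2 * \<kappa>^2 * x)
        = - (\<kappa>'*x*y + \<kappa>*z*y + \<kappa>*x*(z*\<kappa>)) - (z*\<kappa>*\<kappa> - y*\<kappa>')*(2*x)"
      using \<open>x \<noteq> 0\<close> \<open>y \<noteq> 0\<close> \<open>\<kappa> \<noteq> 0\<close> frenet
      unfolding laplace_axial_def sff_det_def sff_det'_def
      by (simp add: x_def y_def z_def w_def \<kappa>_def \<kappa>'_def field_simps power2_eq_square)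
    then show ?thesis
      using radial_axial[OF \<open>u \<in> I\<close>] by (simp add: w_def algebra_simps power2_eq_square)
  qed
  define T where "T = 2*\<kappa>*x - 2*(mu*x - y - (la-mu)*(la*x*y - 2)*x)"
  have "x*y*(la*(-(y^2*\<kappa>) + 2*z^2*\<kappa> - x*y*\<kappa>^2) - mu*(z^2*\<kappa> - 2*y^2*\<kappa> - w*z*\<kappa>^2)
        + \<kappa>'*(la*x*z + mu*w*y))
      - (la*x*z + mu*w*y)*(x*y*\<kappa>' - \<kappa>*z*y - 3*\<kappa>^2*x*z - 2*mu*w*\<kappa>^2*x)
      = \<kappa>*((3*x*z + 2*mu*w*x)*((la-mu)*z*y + \<kappa>*(la*x*z + mu*w*y))
         + y*(2*mu*x*(z^2 + y^2 - 1) - T - x*\<kappa>*(la*x*y - mu*w*z - 2) - y*(la*x*y - mu*w*z - 2)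
              + 2*x*(la-mu)*(la*x*y - mu*w*z - 2)))"
    unfolding T_def by algebra
  then have "\<kappa> * (y * (- T)) = 0"
    using h1 unit h2 h2' axial by simp
  then have "T = 0"
    using \<open>\<kappa> \<noteq> 0\<close> \<open>y \<noteq> 0\<close> by simp
  then show ?thesis
    using \<open>x \<noteq> 0\<close> unfolding T_def by (simp add: x_def y_def \<kappa>_def field_simps)
qed

lemma laplace_eq_imp_profile_ode:
  assumes "I \<noteq> {}"
    and "\<forall>u\<in>I. \<forall>v\<in>{0..<2*pi}. (\<chi> k. laplace_II X (\<lambda>u' v'. X u' v' $ k) u v) = A *v X u v"
  shows "profile_ode I p q p' q' curvature (A $ 1 $ 1) (A $ 3 $ 3)"
proof -
  note radial_axial = laplace_eq_imp_radial_axial[OF assms(2)]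
  show ?thesis
  proof (intro profile_ode.intro frenet_curve profile_ode_axioms.intro)
    fix u assume "u \<in> I"
    show "curvature u \<noteq> 0" "q' u \<noteq> 0" "p u > 0"
      using curvature_nz q'_nz radius_pos \<open>u \<in> I\<close> by auto
    show "A $ 1 $ 1 * p u * q' u - A $ 3 $ 3 * q u * p' u = 2"
      using first_integral_of_radial_axial \<open>u \<in> I\<close> radial_axial by blast
    show "curvature u = A $ 3 $ 3 - q' u / p u - (A $ 1 $ 1 - A $ 3 $ 3) * (A $ 1 $ 1 * p u * q' u - 2)"
      using curvature_eq_of_radial_axial radial_axial \<open>u \<in> I\<close> by blast
  qed fact
qed

end

lemma smooth_real_on_has_derivatives:
  assumes "smooth_real_on S f" "x \<in> S"
  shows "(f has_real_derivative deriv f x) (at x)"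
    and "(deriv f has_real_derivative deriv (deriv f) x) (at x)"
    and "(deriv (deriv f) has_real_derivative deriv (deriv (deriv f)) x) (at x)"
proof -
  have "((deriv ^^ n) f has_real_derivative (deriv ^^ Suc n) f x) (at x)" for n
    using assms unfolding smooth_real_on_def by blast
  from this[of 0] this[of 1] this[of 2]
  show "(f has_real_derivative deriv f x) (at x)"
    and "(deriv f has_real_derivative deriv (deriv f) x) (at x)"
    and "(deriv (deriv f) has_real_derivative deriv (deriv (deriv f)) x) (at x)"
    by (simp_all add: numeral_2_eq_2)
qed

theorem mainTheorem1:
  fixes p q :: "real \<Rightarrow> real" and a b :: real and A :: "real^3^3"
  assumes smooth_p: "smooth_real_on {a<..<b} p"
      and smooth_q: "smooth_real_on {a<..<b} q"
      and pos: "\<forall>u\<in>{a<..<b}. p u > 0"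
      and arclen: "\<forall>u\<in>{a<..<b}. (deriv p u)^2 + (deriv q u)^2 = 1"
      and K_nz: "\<forall>u\<in>{a<..<b}. \<forall>v\<in>{0..<2*pi}. gauss_curv (rev_surf p q) u v \<noteq> 0"
      and eq: "\<forall>u\<in>{a<..<b}. \<forall>v\<in>{0..<2*pi}.
                 (\<chi> k. laplace_II (rev_surf p q) (\<lambda>u' v'. rev_surf p q u' v' $ k) u v)
                 = A *v rev_surf p q u v"
  shows "\<exists>C. (is_catenoid C \<or> is_sphere C)
             \<and> (\<lambda>(u, v). rev_surf p q u v) ` ({a<..<b} \<times> {0..<2*pi}) \<subseteq> C
             \<and> openin (top_of_set C) ((\<lambda>(u, v). rev_surf p q u v) ` ({a<..<b} \<times> {0..<2*pi}))"
proof (cases "a < b")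
  case False
  then have "{a<..<b} = {}"
    by auto
  moreover have "is_sphere (sphere (0::real^3) 1)"
    unfolding is_sphere_def by (intro exI[of _ 0] exI[of _ 1]) simp
  ultimately show ?thesis
    by auto
next
  case True
  interpret profile_curve "{a<..<b}" p q "deriv p" "deriv q" "deriv (deriv p)" "deriv (deriv q)"
    "deriv (deriv (deriv p))" "deriv (deriv (deriv q))"
    using smooth_real_on_has_derivatives[OF smooth_p] smooth_real_on_has_derivatives[OF smooth_q]
      pos arclen by unfold_locales auto
  interpret nondegenerate_profile "{a<..<b}" p q "deriv p" "deriv q" "deriv (deriv p)" "deriv (deriv q)"
    "deriv (deriv (deriv p))" "deriv (deriv (deriv q))"
    using K_nz by unfold_locales (auto simp: gauss_curv_rev_surf)
  have "profile_ode {a<..<b} p q (deriv p) (deriv q) curvature (A $ 1 $ 1) (A $ 3 $ 3)"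
    using laplace_eq_imp_profile_ode \<open>a < b\<close> eq by simp
  then show ?thesis
    by (rule profile_ode.rev_surf_openin_sphere_or_catenoid)
qed

end
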